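(* Let $(\Omega,\mathcal{F},P)$ be a probability space, let $(A_t)_{t\ge0}$ be a random bounded $n\times n$ matrix function of $t$ (measurable in $t$) which converges almost surely, as $t\to\infty$, to a random matrix $A^0$ that is almost surely asymptotically stable. For $t_0\ge 0$ let $\Psi_{t,t_0}=e^{A^0(t-t_0)}$ (so $\frac{d}{dt}\Psi_{t,t_0}=A^0\Psi_{t,t_0}$, $\Psi_{t_0,t_0}=I$), and let $\Phi_{t,t_0}$ satisfy $\frac{d}{dt}\Phi_{t,t_0}=A_t\Phi_{t,t_0}$, $\Phi_{t_0,t_0}=I$. Then $$\lim_{T\to\infty}\frac1T\int_{t_0}^T\lVert\Phi_{t,t_0}-\Psi_{t,t_0}\rVert^2\,dt=0\quad\text{almost surely.}$$
   Context: $\lVert\cdot\rVert$ denotes the matrix 2-norm; a matrix is asymptotically stable if all its eigenvalues have strictly negative real parts. *)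

theory Defs
  imports "HOL-Analysis.Analysis" "HOL-Probability.Probability"
begin

definition mat_norm2 :: "real^'n^'n \<Rightarrow> real" where
  "mat_norm2 A = onorm (\<lambda>x. A *v x)"

fun mat_pow :: "real^'n^'n \<Rightarrow> nat \<Rightarrow> real^'n^'n" where
  "mat_pow A 0 = mat 1"
| "mat_pow A (Suc k) = A ** mat_pow A k"

definition mat_exp :: "real^'n^'n \<Rightarrow> real^'n^'n" where
  "mat_exp A = (\<Sum>k. (1 / fact k) *\<^sub>R mat_pow A k)"

definition cmat :: "real^'n^'n \<Rightarrow> complex^'n^'n" where
  "cmat A = (\<chi> i j. complex_of_real (A $ i $ j))"

definition is_eigenvalue :: "real^'n^'n \<Rightarrow> complex \<Rightarrow> bool" where
  "is_eigenvalue A l \<longleftrightarrow> (\<exists>v. v \<noteq> 0 \<and> cmat A *v v = l *s v)"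

definition asymp_stable :: "real^'n^'n \<Rightarrow> bool" where
  "asymp_stable A \<longleftrightarrow> (\<forall>l. is_eigenvalue A l \<longrightarrow> Re l < 0)"

end

theory Submission
  imports Defs "Jordan_Normal_Form.Schur_Decomposition"
begin

(* Fix a sample point omega for which A_t -> A0 and A0 is asymptotically stable;
   the claim is then a deterministic statement about the matrix solutions Phi and Psi.
   (1) A stable matrix is similar (over the complex numbers) to a matrix T that is coercive,
       Re <w, T w> <= -alpha |w|^2: triangularise by a Schur decomposition and rescale the
       basis so that the off-diagonal entries become small compared to the diagonal.
   (2) If z solves z' = N_t z (in integral form) and N_t -> B with B coercive, then z -> 0:
       on short time steps of fixed length h the squared norm contracts by 1 - alpha h.
   (3) Transporting (2) through the similarity of (1) and applying it column by column shows
       that both Phi (with N_t = A_t) and Psi = exp((t - t0) A0) (with N_t = A0) tend to 0.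
   (4) Hence |Phi_t - Psi_t|^2 -> 0, and a Cesaro argument gives the vanishing time average. *)

no_notation vec_index (infixl "$" 100)
hide_const (open) Matrix.mat Matrix.vec

section \<open>The entrywise l1 norm of a matrix\<close>

text \<open>A crude but convenient matrix norm: it dominates both the operator norm and the
  Euclidean norm, is submultiplicative and continuous.\<close>

definition l1n :: "'a::real_normed_vector^'n^'m \<Rightarrow> real" where
  "l1n M = (\<Sum>i\<in>UNIV. \<Sum>j\<in>UNIV. norm (M$i$j))"

lemma l1n_nonneg: "0 \<le> l1n M"
  unfolding l1n_def by (intro sum_nonneg) auto

lemma norm_vec_le_l1: "norm (x::'a::real_normed_vector^'n) \<le> (\<Sum>i\<in>UNIV. norm (x$i))"
  unfolding norm_vec_def by (rule L2_set_le_sum) auto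

lemma norm_le_l1n: "norm (M::'a::real_normed_vector^'n^'m) \<le> l1n M"
proof -
  have "norm M \<le> (\<Sum>i\<in>UNIV. norm (M$i))" by (rule norm_vec_le_l1)
  also have "\<dots> \<le> (\<Sum>i\<in>UNIV. \<Sum>j\<in>UNIV. norm (M$i$j))"
    by (intro sum_mono norm_vec_le_l1)
  finally show ?thesis by (simp add: l1n_def)
qed

lemma norm_mult_vec_le_l1n:
  fixes M :: "'a::real_normed_field^'n^'m"
  shows "norm (M *v x) \<le> l1n M * norm x"
proof -
  have row: "norm ((M *v x)$i) \<le> (\<Sum>j\<in>UNIV. norm (M$i$j)) * norm x" for i
  proof -
    have "norm ((M *v x)$i) = norm (\<Sum>j\<in>UNIV. M$i$j * x$j)"
      by (simp add: matrix_vector_mult_def)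
    also have "\<dots> \<le> (\<Sum>j\<in>UNIV. norm (M$i$j * x$j))" by (rule norm_sum)
    also have "\<dots> \<le> (\<Sum>j\<in>UNIV. norm (M$i$j) * norm x)"
      by (rule sum_mono) (simp add: norm_mult mult_left_mono Finite_Cartesian_Product.norm_nth_le)
    finally show ?thesis by (simp add: sum_distrib_right)
  qed
  have "norm (M *v x) \<le> (\<Sum>i\<in>UNIV. norm ((M *v x)$i))" by (rule norm_vec_le_l1)
  also have "\<dots> \<le> (\<Sum>i\<in>UNIV. (\<Sum>j\<in>UNIV. norm (M$i$j)) * norm x)" by (intro sum_mono row)
  finally show ?thesis by (simp add: l1n_def sum_distrib_right)
qed

lemma l1n_mult: "l1n ((A::real^'n^'m) ** (B::real^'k^'n)) \<le> l1n A * l1n B"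
proof -
  have row_le: "(\<Sum>j\<in>UNIV. \<bar>B$k$j\<bar>) \<le> l1n B" for k
    unfolding l1n_def real_norm_def
    by (rule member_le_sum[of k UNIV "\<lambda>k. \<Sum>j\<in>UNIV. \<bar>B$k$j\<bar>"]) auto
  have "l1n (A ** B) = (\<Sum>i\<in>UNIV. \<Sum>j\<in>UNIV. \<bar>\<Sum>k\<in>UNIV. A$i$k * B$k$j\<bar>)"
    by (simp add: l1n_def matrix_matrix_mult_def)
  also have "\<dots> \<le> (\<Sum>i\<in>UNIV. \<Sum>j\<in>UNIV. \<Sum>k\<in>UNIV. \<bar>A$i$k\<bar> * \<bar>B$k$j\<bar>)"
    by (intro sum_mono) (simp add: abs_mult[symmetric] sum_abs)
  also have "\<dots> = (\<Sum>i\<in>UNIV. \<Sum>k\<in>UNIV. \<bar>A$i$k\<bar> * (\<Sum>j\<in>UNIV. \<bar>B$k$j\<bar>))"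
    by (intro sum.cong refl) (subst sum.swap, simp add: sum_distrib_left)
  also have "\<dots> \<le> (\<Sum>i\<in>UNIV. \<Sum>k\<in>UNIV. \<bar>A$i$k\<bar> * l1n B)"
    by (intro sum_mono mult_left_mono row_le) auto
  also have "\<dots> = l1n A * l1n B"
    by (simp add: l1n_def sum_distrib_right)
  finally show ?thesis .
qed

lemma continuous_l1n: "continuous_on UNIV (l1n :: 'a::real_normed_vector^'n^'m \<Rightarrow> real)"
  unfolding l1n_def by (intro continuous_intros)

lemma tendsto_l1n_zero:
  "(f \<longlongrightarrow> (0::'a::real_normed_vector^'n^'m)) F \<Longrightarrow> ((\<lambda>x. l1n (f x)) \<longlongrightarrow> 0) F"
  using continuous_on_tendsto_compose[OF continuous_l1n, of f 0 F] by (simp add: l1n_def)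

lemma mat_norm2_nonneg: "0 \<le> mat_norm2 X"
  unfolding mat_norm2_def by (rule onorm_pos_le[OF matrix_vector_mul_bounded_linear])

lemma mat_norm2_le_l1n: "mat_norm2 X \<le> l1n X"
  unfolding mat_norm2_def l1n_def real_norm_def by (rule onorm_le_matrix_component_sum)

lemma mat_norm2_triangle: "mat_norm2 (X + Y) \<le> mat_norm2 X + mat_norm2 Y"
proof -
  have "(\<lambda>x. (X + Y) *v x) = (\<lambda>x. X *v x + Y *v x)"
    by (simp add: matrix_vector_mult_add_rdistrib)
  thus ?thesis unfolding mat_norm2_def
    by (metis onorm_triangle[OF matrix_vector_mul_bounded_linear matrix_vector_mul_bounded_linear])
qed

text \<open>Being 1-Lipschitz with respect to the (continuous) l1 norm, the operator norm is
  continuous; this makes the integrand of the main theorem continuous.\<close>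

lemma isCont_mat_norm2: "isCont mat_norm2 (Y::real^'n^'n)"
proof -
  have lip: "norm (mat_norm2 X - mat_norm2 Y) \<le> l1n (X - Y)" for X
  proof -
    have "mat_norm2 X \<le> mat_norm2 Y + mat_norm2 (X - Y)"
      using mat_norm2_triangle[of Y "X - Y"] by simp
    moreover have "mat_norm2 Y \<le> mat_norm2 X + mat_norm2 (Y - X)"
      using mat_norm2_triangle[of X "Y - X"] by simp
    moreover have "mat_norm2 (Y - X) = mat_norm2 (X - Y)"
    proof -
      have "(\<lambda>x. (Y - X) *v x) = (\<lambda>x. - ((X - Y) *v x))"
        by (simp add: matrix_vector_mult_diff_rdistrib)
      thus ?thesis by (simp add: mat_norm2_def onorm_neg)
    qed
    ultimately show ?thesis using mat_norm2_le_l1n[of "X - Y"] by simp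
  qed
  have "((\<lambda>X. X - Y) \<longlongrightarrow> 0) (at Y)"
    using LIM_zero[OF tendsto_ident_at[of Y UNIV]] by simp
  hence "((\<lambda>X. l1n (X - Y)) \<longlongrightarrow> 0) (at Y)" by (rule tendsto_l1n_zero)
  hence "((\<lambda>X. mat_norm2 X - mat_norm2 Y) \<longlongrightarrow> 0) (at Y)"
    by (rule Lim_null_comparison[OF always_eventually[OF allI[OF lip]]])
  thus ?thesis unfolding isCont_def by (rule LIM_zero_cancel)
qed

section \<open>The matrix exponential\<close>

lemma l1n_mat_pow: "l1n (mat_pow A k) \<le> l1n (mat 1 :: real^'n^'n) * l1n (A::real^'n^'n) ^ k"
proof (induction k)
  case (Suc k)
  have "l1n (mat_pow A (Suc k)) \<le> l1n A * l1n (mat_pow A k)" by (simp add: l1n_mult)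
  also have "\<dots> \<le> l1n A * (l1n (mat 1 :: real^'n^'n) * l1n A ^ k)"
    using Suc l1n_nonneg by (intro mult_left_mono) auto
  finally show ?case by (simp add: algebra_simps)
qed simp

text \<open>The exponential series converges absolutely, being dominated by a scalar exponential series.\<close>

lemma summable_mat_exp: "summable (\<lambda>k. (1 / fact k) *\<^sub>R mat_pow (A::real^'n^'n) k)"
proof (rule summable_norm_cancel, rule summable_comparison_test)
  let ?c = "l1n (mat 1 :: real^'n^'n)"
  show "\<exists>N. \<forall>k\<ge>N. norm (norm ((1 / fact k) *\<^sub>R mat_pow A k)) \<le> ?c * (inverse (fact k) * l1n A ^ k)"
  proof (intro exI allI impI)
    fix k :: nat
    have "norm (norm ((1 / fact k) *\<^sub>R mat_pow A k)) = (1 / fact k) * norm (mat_pow A k)" by simp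
    also have "\<dots> \<le> (1 / fact k) * (?c * l1n A ^ k)"
      using norm_le_l1n[of "mat_pow A k"] l1n_mat_pow[of A k] by (intro mult_left_mono) auto
    finally show "norm (norm ((1 / fact k) *\<^sub>R mat_pow A k)) \<le> ?c * (inverse (fact k) * l1n A ^ k)"
      by (simp add: field_simps)
  qed
  show "summable (\<lambda>k. ?c * (inverse (fact k) * l1n A ^ k))"
    by (intro summable_mult summable_exp)
qed

lemma mat_pow_scaleR: "mat_pow (s *\<^sub>R A) k = (s^k) *\<^sub>R mat_pow (A::real^'n^'n) k"
  by (induction k)
    (simp_all add: Finite_Cartesian_Product.vec_eq_iff matrix_matrix_mult_def sum_distrib_left algebra_simps)

definition exp_coeff :: "real^'n^'n \<Rightarrow> 'n \<Rightarrow> 'n \<Rightarrow> nat \<Rightarrow> real" where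
  "exp_coeff A i j k = mat_pow A k $ i $ j / fact k"

lemma mat_exp_entry:
  fixes A :: "real^'n^'n"
  shows "summable (\<lambda>k. exp_coeff A i j k * s^k)"
    and "mat_exp (s *\<^sub>R A) $ i $ j = (\<Sum>k. exp_coeff A i j k * s^k)"
proof -
  have entry: "bounded_linear (\<lambda>M::real^'n^'n. M $ i $ j)"
    using bounded_linear_compose[OF bounded_linear_vec_nth bounded_linear_vec_nth] .
  have eq: "(\<lambda>k. ((1 / fact k) *\<^sub>R mat_pow (s *\<^sub>R A) k) $ i $ j) = (\<lambda>k. exp_coeff A i j k * s^k)"
    by (rule ext) (simp add: exp_coeff_def mat_pow_scaleR field_simps)
  from bounded_linear.summable[OF entry summable_mat_exp[of "s *\<^sub>R A"]]
  show "summable (\<lambda>k. exp_coeff A i j k * s^k)" by (simp only: eq)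
  from bounded_linear.suminf[OF entry summable_mat_exp[of "s *\<^sub>R A"]]
  show "mat_exp (s *\<^sub>R A) $ i $ j = (\<Sum>k. exp_coeff A i j k * s^k)" by (simp only: eq mat_exp_def)
qed

lemma diffs_exp_coeff: "diffs (exp_coeff A i j) k = (\<Sum>l\<in>UNIV. A$i$l * exp_coeff A l j k)"
proof -
  have "(\<Sum>l\<in>UNIV. A$i$l * exp_coeff A l j k) = mat_pow A (Suc k) $ i $ j / fact k"
    by (simp add: exp_coeff_def sum_divide_distrib matrix_matrix_mult_def)
  moreover have "0 < (fact k::real) + fact k * real k" by (simp add: add_pos_nonneg)
  ultimately show ?thesis by (simp add: diffs_def exp_coeff_def field_simps)
qed

lemma mat_exp_entry_deriv:
  "((\<lambda>s. mat_exp (s *\<^sub>R A) $ i $ j) has_real_derivative (A ** mat_exp (x *\<^sub>R A)) $ i $ j) (at x)"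
proof -
  have d: "((\<lambda>s. \<Sum>k. exp_coeff A i j k * s^k) has_real_derivative
             (\<Sum>k. diffs (exp_coeff A i j) k * x^k)) (at x)"
    by (rule termdiffs_strong_converges_everywhere) (rule mat_exp_entry(1))
  have "(A ** mat_exp (x *\<^sub>R A)) $ i $ j = (\<Sum>l\<in>UNIV. A$i$l * (\<Sum>k. exp_coeff A l j k * x^k))"
    by (simp add: matrix_matrix_mult_def mat_exp_entry(2))
  also have "\<dots> = (\<Sum>l\<in>UNIV. \<Sum>k. A$i$l * (exp_coeff A l j k * x^k))"
    by (intro sum.cong refl suminf_mult[symmetric] mat_exp_entry(1))
  also have "\<dots> = (\<Sum>k. \<Sum>l\<in>UNIV. A$i$l * (exp_coeff A l j k * x^k))"
    by (rule suminf_sum[symmetric]) (intro summable_mult mat_exp_entry(1))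
  also have "\<dots> = (\<Sum>k. diffs (exp_coeff A i j) k * x^k)"
    by (simp add: diffs_exp_coeff sum_distrib_right mult.assoc)
  finally show ?thesis using d by (simp add: mat_exp_entry(2))
qed

lemma has_vector_derivative_entrywise:
  fixes f :: "real \<Rightarrow> real^'n^'m"
  assumes "\<And>i j. ((\<lambda>s. f s $ i $ j) has_real_derivative (D $ i $ j)) (at x within S)"
  shows "(f has_vector_derivative D) (at x within S)"
proof -
  have "(f has_derivative (\<lambda>h. h *\<^sub>R D)) (at x within S)"
  proof (subst has_derivative_componentwise_within, intro ballI)
    fix b :: "real^'n^'m" assume "b \<in> Basis"
    then obtain i j where b: "b = axis i (axis j 1)" by (auto simp: Basis_vec_def)
    have "((\<lambda>s. f s $ i $ j) has_derivative (\<lambda>h. D $ i $ j * h)) (at x within S)"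
      using assms[of i j] by (simp add: has_field_derivative_def)
    thus "((\<lambda>s. inner (f s) b) has_derivative (\<lambda>h. inner (h *\<^sub>R D) b)) (at x within S)"
      by (simp add: b inner_axis mult.commute)
  qed
  thus ?thesis by (simp add: has_vector_derivative_def)
qed

lemma mat_exp_shift_deriv:
  "((\<lambda>t. mat_exp ((t - t0) *\<^sub>R A)) has_vector_derivative (A ** mat_exp ((x - t0) *\<^sub>R A))) (at x within S)"
proof (rule has_vector_derivative_entrywise)
  fix i j
  have "((\<lambda>t. t - t0) has_real_derivative 1) (at x within S)"
    by (auto intro!: derivative_eq_intros)
  from DERIV_chain2[OF mat_exp_entry_deriv[of A i j "x - t0"] this]
  show "((\<lambda>t. mat_exp ((t - t0) *\<^sub>R A) $ i $ j) has_real_derivative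
          (A ** mat_exp ((x - t0) *\<^sub>R A)) $ i $ j) (at x within S)"
    by simp
qed

lemma mat_exp_shift_integral:
  assumes "t \<ge> t0"
  shows "((\<lambda>s. A ** mat_exp ((s - t0) *\<^sub>R A)) has_integral
           (mat_exp ((t - t0) *\<^sub>R A) - mat_exp ((t0 - t0) *\<^sub>R A))) {t0..t}"
  by (rule fundamental_theorem_of_calculus[OF assms]) (rule mat_exp_shift_deriv)

lemma continuous_on_mat_exp_shift: "continuous_on S (\<lambda>t. mat_exp ((t - t0) *\<^sub>R A))"
  by (rule continuous_at_imp_continuous_on) (use mat_exp_shift_deriv has_vector_derivative_continuous in blast)

lemma integral_equation_subinterval:
  fixes f :: "real \<Rightarrow> 'a::banach"
  assumes eq: "\<And>t. t \<ge> a \<Longrightarrow> (f has_integral (z t - z a)) {a..t}"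
    and st: "a \<le> s" "s \<le> t"
  shows "(f has_integral (z t - z s)) {s..t}"
proof -
  have int: "f integrable_on {a..t}" using eq[of t] st by auto
  have "integral {a..s} f + integral {s..t} f = integral {a..t} f"
    by (rule Henstock_Kurzweil_Integration.integral_combine[OF st int])
  hence "integral {s..t} f = z t - z s"
    using integral_unique[OF eq[of s]] integral_unique[OF eq[of t]] st by (simp add: algebra_simps)
  moreover have "f integrable_on {s..t}"
    using st by (intro integrable_subinterval_real[OF int]) auto
  ultimately show ?thesis by (metis has_integral_integral)
qed

lemma integral_equation_continuous:
  fixes f :: "real \<Rightarrow> 'a::banach"
  assumes eq: "\<And>t. t \<ge> a \<Longrightarrow> (f has_integral (z t - z a)) {a..t}"
  shows "continuous_on {a..T} z"
proof (cases "a \<le> T")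
  case True
  have "continuous_on {a..T} (\<lambda>t. z a + integral {a..t} f)"
    using eq[OF True] by (intro continuous_intros indefinite_integral_continuous_1) blast
  thus ?thesis
    by (rule continuous_on_eq) (simp add: integral_unique[OF eq])
qed simp

section \<open>Decay of solutions driven by an asymptotically coercive matrix\<close>

lemma short_step_growth:
  fixes z F :: "real \<Rightarrow> 'a::real_normed_vector"
  assumes h: "0 \<le> h" and K: "0 \<le> K" "K * h \<le> 1/2"
    and cont: "continuous_on {t..t+h} z"
    and eq: "\<And>s. s \<in> {t..t+h} \<Longrightarrow> (F has_integral (z s - z t)) {t..s}"
    and bnd: "\<And>v. v \<in> {t..t+h} \<Longrightarrow> norm (F v) \<le> K * norm (z v)"
    and u: "u \<in> {t..t+h}"
  shows "norm (z u) \<le> 2 * norm (z t)" and "norm (z u - z t) \<le> 2 * K * h * norm (z t)"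
proof -
  obtain u0 where u0: "u0 \<in> {t..t+h}" and max: "\<And>u. u \<in> {t..t+h} \<Longrightarrow> norm (z u) \<le> norm (z u0)"
    using continuous_attains_sup[OF compact_Icc _ continuous_on_norm[OF cont]] h by fastforce
  define m where "m = norm (z u0)"
  have near: "norm (z u - z t) \<le> K * m * h" if u: "u \<in> {t..t+h}" for u
  proof -
    have "norm (F v) \<le> K * m" if v: "v \<in> cbox t u" for v
    proof -
      have "v \<in> {t..t+h}" using u v by auto
      thus ?thesis using bnd[of v] max[of v] K unfolding m_def by (meson mult_left_mono order_trans)
    qed
    moreover have "(F has_integral (z u - z t)) (cbox t u)" using eq[OF u] by (simp add: cbox_interval)
    ultimately have "norm (z u - z t) \<le> K * m * (u - t)"
      using has_integral_bound[of "K * m" F "z u - z t" t u] K u by (simp add: m_def)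
    also have "\<dots> \<le> K * m * h" using u K by (intro mult_left_mono) (auto simp: m_def)
    finally show ?thesis .
  qed
  have "m \<le> norm (z t) + K * m * h"
    using near[OF u0] norm_triangle_ineq2[of "z u0" "z t"] unfolding m_def by linarith
  moreover have "K * m * h \<le> m / 2"
    using mult_left_mono[OF K(2), of m] by (simp add: m_def mult.assoc mult.left_commute)
  ultimately have m2: "m \<le> 2 * norm (z t)" by linarith
  show "norm (z u) \<le> 2 * norm (z t)" using max[OF u] m2 by (simp add: m_def)
  have "K * m * h \<le> K * (2 * norm (z t)) * h"
    using m2 K h by (intro mult_right_mono mult_left_mono) auto
  thus "norm (z u - z t) \<le> 2 * K * h * norm (z t)" using near[OF u] by (simp add: mult_ac)
qed

text \<open>The contraction estimate: if N v stays e-close to a coercive B (with Re <w, B w> <=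
  -alpha |w|^2) along a short step, then |z(t + h)|^2 <= (1 - alpha h) |z(t)|^2.  The proof
  expands |z t + D|^2 for the increment D, which is h B z(t) up to an error of order
  (e + K^2 h) h |z t|.\<close>

lemma coercive_contraction_step:
  fixes z :: "real \<Rightarrow> complex^'n" and N :: "real \<Rightarrow> complex^'n^'n"
  assumes h: "0 < h" and e: "0 \<le> e" and K: "0 \<le> K"
    and coer: "\<And>w. inner w (B *v w) \<le> - \<alpha> * (norm w)^2"
    and small: "4 * e + 8 * K^2 * h \<le> \<alpha>"
    and int: "((\<lambda>v. N v *v z v) has_integral (z (t+h) - z t)) {t..t+h}"
    and grow: "\<And>v. v \<in> {t..t+h} \<Longrightarrow> norm (z v) \<le> 2 * norm (z t)"
    and near: "\<And>v. v \<in> {t..t+h} \<Longrightarrow> norm (z v - z t) \<le> 2 * K * h * norm (z t)"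
    and close: "\<And>v w. v \<in> {t..t+h} \<Longrightarrow> norm ((N v - B) *v w) \<le> e * norm w"
    and B_bnd: "\<And>w. norm (B *v w) \<le> K * norm w"
  shows "norm (z (t+h))^2 \<le> (1 - \<alpha> * h) * norm (z t)^2"
proof -
  define x where "x = norm (z t)"
  define D where "D = z (t+h) - z t"
  define Bz where "Bz = B *v z t"
  have x0: "0 \<le> x" by (simp add: x_def)
  have D_bnd: "norm D \<le> 2 * K * h * x"
    using near[of "t+h"] h by (simp add: D_def x_def)
  have rest_bnd: "norm (N v *v z v - Bz) \<le> 2 * (e + K^2 * h) * x" if v: "v \<in> {t..t+h}" for v
  proof -
    have "N v *v z v - Bz = (N v - B) *v z v + B *v (z v - z t)"
      by (simp add: Bz_def matrix_vector_mult_diff_rdistrib matrix_vector_right_distrib algebra_simps)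
    hence "norm (N v *v z v - Bz) \<le> norm ((N v - B) *v z v) + norm (B *v (z v - z t))"
      by (simp add: norm_triangle_ineq)
    also have "\<dots> \<le> e * norm (z v) + K * norm (z v - z t)"
      using close[OF v, of "z v"] B_bnd[of "z v - z t"] by (rule add_mono)
    also have "\<dots> \<le> e * (2 * x) + K * (2 * K * h * x)"
      using grow[OF v] near[OF v] e K unfolding x_def by (intro add_mono mult_left_mono)
    finally show ?thesis by (simp add: algebra_simps power2_eq_square)
  qed
  have "((\<lambda>v. N v *v z v - Bz) has_integral (D - h *\<^sub>R Bz)) (cbox t (t+h))"
    using has_integral_diff[OF int has_integral_const_real[of Bz t "t+h"]] h by (simp add: D_def)
  from has_integral_bound[OF _ this] rest_bnd e K x0 h
  have rest: "norm (D - h *\<^sub>R Bz) \<le> 2 * (e + K^2 * h) * x * h" by simp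
  have main_part: "h * inner (z t) Bz \<le> h * (- \<alpha> * x^2)"
    using coer[of "z t"] h unfolding Bz_def x_def by (intro mult_left_mono) auto
  have "inner (z t) (D - h *\<^sub>R Bz) \<le> x * norm (D - h *\<^sub>R Bz)"
    using norm_cauchy_schwarz[of "z t" "D - h *\<^sub>R Bz"] by (simp add: x_def)
  also have "\<dots> \<le> x * (2 * (e + K^2 * h) * x * h)" using rest x0 by (rule mult_left_mono)
  finally have error_part: "inner (z t) (D - h *\<^sub>R Bz) \<le> x * (2 * (e + K^2 * h) * x * h)" .
  have "inner (z t) D = h * inner (z t) Bz + inner (z t) (D - h *\<^sub>R Bz)"
    by (simp add: inner_diff_right)
  also have "\<dots> \<le> h * (- \<alpha> * x^2) + x * (2 * (e + K^2 * h) * x * h)"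
    using main_part error_part by (rule add_mono)
  finally have inner_D: "inner (z t) D \<le> h * (- \<alpha> * x^2) + x * (2 * (e + K^2 * h) * x * h)" .
  have "norm (z (t+h))^2 = norm (z t + D)^2" by (simp add: D_def)
  also have "\<dots> = x^2 + 2 * inner (z t) D + (norm D)^2"
    by (simp add: x_def power2_norm_eq_inner inner_add_left inner_add_right inner_commute)
  also have "\<dots> \<le> x^2 + 2 * (h * (- \<alpha> * x^2) + x * (2 * (e + K^2 * h) * x * h)) + (2 * K * h * x)^2"
    using inner_D power_mono[OF D_bnd norm_ge_zero, of 2] by (intro add_mono order_refl mult_left_mono) auto
  also have "\<dots> = (1 - \<alpha> * h) * x^2 + x^2 * h * (4 * e + 8 * K^2 * h - \<alpha>)"
    by (simp add: algebra_simps power2_eq_square)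
  also have "\<dots> \<le> (1 - \<alpha> * h) * x^2"
    using small h by (simp add: mult_nonneg_nonpos del: diff_ge_0_iff_ge)
  finally show ?thesis by (simp add: x_def)
qed

lemma tendsto_zero_by_step_contraction:
  fixes z :: "real \<Rightarrow> 'a::real_normed_vector"
  assumes h: "0 < h" and q: "0 \<le> q" "q < 1" and C: "0 \<le> C"
    and bounded: "\<And>t u. t \<ge> T \<Longrightarrow> u \<in> {t..t+h} \<Longrightarrow> norm (z u) \<le> C * norm (z t)"
    and contract: "\<And>t. t \<ge> T \<Longrightarrow> norm (z (t+h)) \<le> q * norm (z t)"
  shows "(z \<longlongrightarrow> 0) at_top"
proof -
  have grid: "norm (z (T + real k * h)) \<le> q^k * norm (z T)" for k
  proof (induction k)
    case (Suc k)
    have "norm (z (T + real (Suc k) * h)) \<le> q * norm (z (T + real k * h))"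
      using contract[of "T + real k * h"] h by (simp add: algebra_simps)
    also have "\<dots> \<le> q * (q^k * norm (z T))" using Suc q by (intro mult_left_mono)
    finally show ?case by simp
  qed simp
  have bound: "norm (z u) \<le> C * norm (z T) * q^k" if "k \<le> (u - T) / h" for k :: nat and u
  proof -
    define r where "r = (u - T) / h"
    define k' where "k' = nat \<lfloor>r\<rfloor>"
    have r: "real k' \<le> r" "r < real k' + 1" "k \<le> k'"
      using that by (auto simp: r_def k'_def le_nat_floor)
    have k': "T + real k' * h \<le> u" "u \<le> T + real k' * h + h" "k \<le> k'"
      using r h by (auto simp: r_def field_simps)
    have "norm (z u) \<le> C * norm (z (T + real k' * h))"
      using bounded[of "T + real k' * h" u] k' h by auto
    also have "\<dots> \<le> C * (q^k' * norm (z T))" using grid C by (intro mult_left_mono)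
    also have "\<dots> \<le> C * (q^k * norm (z T))"
      using C q by (intro mult_left_mono mult_right_mono power_decreasing k'(3)) auto
    finally show ?thesis by (simp add: mult_ac)
  qed
  show ?thesis
  proof (rule tendstoI)
    fix \<epsilon> :: real assume "\<epsilon> > 0"
    moreover have "(\<lambda>k. C * norm (z T) * q^k) \<longlonglongrightarrow> C * norm (z T) * 0"
      by (intro tendsto_mult tendsto_const LIMSEQ_power_zero) (use q in auto)
    ultimately obtain k where k: "C * norm (z T) * q^k < \<epsilon>"
      by (metis (no_types, lifting) eventually_sequentially lessThan_iff mult_zero_right order_tendstoD(2) order.refl)
    have "eventually (\<lambda>u. real k \<le> (u - T) / h) at_top"
      using h by (intro eventually_ge_at_top[of "T + real k * h", THEN eventually_mono])
        (simp add: field_simps)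
    thus "eventually (\<lambda>u. dist (z u) 0 < \<epsilon>) at_top"
      by (rule eventually_mono) (use bound k in fastforce)
  qed
qed

lemma eventually_operator_close:
  fixes N :: "'b \<Rightarrow> 'a::real_normed_field^'n^'m"
  assumes conv: "(N \<longlongrightarrow> B) F" and e: "e > 0"
  shows "eventually (\<lambda>u. \<forall>w. norm ((N u - B) *v w) \<le> e * norm w) F"
proof -
  have "((\<lambda>u. l1n (N u - B)) \<longlongrightarrow> 0) F"
    using conv by (intro tendsto_l1n_zero) (simp add: LIM_zero)
  hence "eventually (\<lambda>u. l1n (N u - B) < e) F" using e by (rule order_tendstoD(2))
  thus ?thesis
  proof (rule eventually_mono, intro allI)
    fix u and w :: "'a^'n" assume "l1n (N u - B) < e"
    hence "l1n (N u - B) * norm w \<le> e * norm w" by (intro mult_right_mono) auto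
    with norm_mult_vec_le_l1n show "norm ((N u - B) *v w) \<le> e * norm w" by (rule order_trans)
  qed
qed

text \<open>Decay theorem: if z' = N(t) z with N(t) -> B and B coercive, then z(t) -> 0.
  The step length h is chosen so small that both previous lemmas apply.\<close>

theorem coercive_limit_decay:
  fixes z :: "real \<Rightarrow> complex^'n" and N :: "real \<Rightarrow> complex^'n^'n"
  assumes \<alpha>: "\<alpha> > 0" and coer: "\<And>w. inner w (B *v w) \<le> - \<alpha> * (norm w)^2"
    and conv: "(N \<longlongrightarrow> B) at_top"
    and eq: "\<And>t. t \<ge> a \<Longrightarrow> ((\<lambda>u. N u *v z u) has_integral (z t - z a)) {a..t}"
  shows "(z \<longlongrightarrow> 0) at_top"
proof -
  define e where "e = \<alpha> / 8"
  have e: "e > 0" using \<alpha> by (simp add: e_def)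
  obtain T where T: "\<And>u. u \<ge> T \<Longrightarrow> (\<forall>w. norm ((N u - B) *v w) \<le> e * norm w) \<and> a \<le> u"
    using eventually_conj[OF eventually_operator_close[OF conv e] eventually_ge_at_top[of a]]
    by (auto simp: eventually_at_top_linorder)
  hence close: "\<And>u w. u \<ge> T \<Longrightarrow> norm ((N u - B) *v w) \<le> e * norm w" by blast
  define K where "K = l1n B + e + 1"
  have K: "K \<ge> 1" using l1n_nonneg[of B] e by (simp add: K_def)
  have B_bnd: "norm (B *v w) \<le> K * norm w" for w
  proof -
    have "l1n B * norm w \<le> K * norm w" using e by (intro mult_right_mono) (auto simp: K_def)
    with norm_mult_vec_le_l1n show ?thesis by (rule order_trans)
  qed
  have N_bnd: "norm (N u *v w) \<le> K * norm w" if "u \<ge> T" for u w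
  proof -
    have "N u *v w = B *v w + (N u - B) *v w" by (simp add: matrix_vector_mult_diff_rdistrib)
    hence "norm (N u *v w) \<le> l1n B * norm w + e * norm w"
      using norm_mult_vec_le_l1n[of B w] close[OF that, of w] by (metis add_mono norm_triangle_le)
    thus ?thesis unfolding K_def distrib_right using norm_ge_zero[of w] by linarith
  qed
  define h where "h = min (min (1/(2*K)) (\<alpha>/(16*K^2))) (1/\<alpha>)"
  have h: "h > 0" using K \<alpha> by (simp add: h_def)
  have "K * h \<le> K * (1/(2*K))" and "16*K^2 * h \<le> 16*K^2 * (\<alpha>/(16*K^2))"
    and "\<alpha> * h \<le> \<alpha> * (1/\<alpha>)"
    using K \<alpha> by (intro mult_left_mono; simp add: h_def)+
  hence Kh: "K * h \<le> 1/2" and small: "4 * e + 8 * K^2 * h \<le> \<alpha>" and \<alpha>h: "\<alpha> * h \<le> 1"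
    using K \<alpha> by (simp_all add: e_def)
  have growth: "norm (z u) \<le> 2 * norm (z t)" "norm (z u - z t) \<le> 2 * K * h * norm (z t)"
    if t: "t \<ge> T" and u: "u \<in> {t..t+h}" for t u
  proof -
    have aT: "a \<le> t" using T[OF t] by blast
    have "continuous_on {a..t+h} z" by (rule integral_equation_continuous) (rule eq)
    hence "continuous_on {t..t+h} z" by (rule continuous_on_subset) (use aT in auto)
    moreover have "((\<lambda>v. N v *v z v) has_integral (z s - z t)) {t..s}" if "s \<in> {t..t+h}" for s
      by (rule integral_equation_subinterval) (use eq aT that in auto)
    moreover have "norm (N v *v z v) \<le> K * norm (z v)" if "v \<in> {t..t+h}" for v
      using N_bnd t that by auto
    ultimately show "norm (z u) \<le> 2 * norm (z t)" "norm (z u - z t) \<le> 2 * K * h * norm (z t)"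
      using short_step_growth[of h K t z "\<lambda>v. N v *v z v" u] h K Kh u by auto
  qed
  have contract: "norm (z (t+h)) \<le> sqrt (1 - \<alpha> * h) * norm (z t)" if t: "t \<ge> T" for t
  proof -
    have aT: "a \<le> t" using T[OF t] by blast
    have T_le: "\<And>v. v \<in> {t..t+h} \<Longrightarrow> T \<le> v" using t by auto
    have "((\<lambda>v. N v *v z v) has_integral (z (t+h) - z t)) {t..t+h}"
      by (rule integral_equation_subinterval) (use eq aT h in auto)
    from coercive_contraction_step[OF h _ _ coer small this growth(1)[OF t] growth(2)[OF t]
        close[OF T_le] B_bnd] e K
    have "norm (z (t+h))^2 \<le> (1 - \<alpha> * h) * norm (z t)^2" by auto
    hence "sqrt (norm (z (t+h))^2) \<le> sqrt ((1 - \<alpha> * h) * norm (z t)^2)"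
      by (rule real_sqrt_le_mono)
    thus ?thesis using \<alpha>h by (simp add: real_sqrt_mult)
  qed
  show ?thesis
    using \<alpha> h \<alpha>h growth(1) contract
    by (intro tendsto_zero_by_step_contraction[where T = T and h = h and C = 2 and q = "sqrt (1 - \<alpha> * h)"]) auto
qed

section \<open>Stable matrices are similar to coercive ones\<close>

definition diag_cmat :: "('n \<Rightarrow> complex) \<Rightarrow> complex^'n^'n" where
  "diag_cmat f = (\<chi> i j. if i = j then f i else 0)"

lemma diag_cmat_mult_left: "(diag_cmat f ** M) $ i $ j = f i * M $ i $ j"
  by (simp add: diag_cmat_def matrix_matrix_mult_def if_distrib[of "\<lambda>x. x * _"] sum.delta cong: if_cong)

lemma diag_cmat_mult_right: "(M ** diag_cmat f) $ i $ j = M $ i $ j * f j"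
  by (simp add: diag_cmat_def matrix_matrix_mult_def if_distrib[of "\<lambda>x. _ * x"] sum.delta' cong: if_cong)

lemma diag_cmat_inverse:
  assumes "\<And>i. f i \<noteq> 0"
  shows "diag_cmat f ** diag_cmat (\<lambda>i. inverse (f i)) = mat 1"
  using assms by (simp add: Finite_Cartesian_Product.vec_eq_iff diag_cmat_mult_left
      Finite_Cartesian_Product.mat_def) (simp add: diag_cmat_def)

lemma diag_dominant_coercive:
  fixes T :: "complex^'n^'n" and w :: "complex^'n"
  assumes diag: "\<And>i. Re (T$i$i) \<le> - \<mu>"
    and off: "\<And>i j. i \<noteq> j \<Longrightarrow> norm (T$i$j) \<le> c" and c: "0 \<le> c"
    and small: "c * real CARD('n) \<le> \<mu> / 2"
  shows "inner w (T *v w) \<le> - (\<mu>/2) * (norm w)^2"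
proof -
  define a where "a = (\<lambda>i. norm (w$i))"
  have a_sq: "(\<Sum>i\<in>UNIV. (a i)^2) = (norm w)^2"
    by (simp add: a_def norm_vec_def L2_set_def sum_nonneg)
  have pairs: "(\<Sum>i\<in>UNIV. \<Sum>j\<in>UNIV. a i * a j) \<le> real CARD('n) * (\<Sum>i\<in>UNIV. (a i)^2)"
  proof -
    have "(\<Sum>i\<in>UNIV. \<Sum>j\<in>UNIV. a i * a j) = (\<Sum>i\<in>UNIV. a i)^2"
      by (simp add: power2_eq_square sum_product)
    also have "\<dots> \<le> (\<Sum>i\<in>UNIV. (a i)^2) * card (UNIV::'n set)"
      by (rule sum_squared_le_sum_of_squares)
    finally show ?thesis by (simp add: mult.commute)
  qed
  have row: "(\<Sum>j\<in>UNIV. inner (w$i) (T$i$j * w$j)) \<le> - \<mu> * (a i)^2 + (\<Sum>j\<in>UNIV. c * (a i * a j))"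
    for i
  proof -
    have "inner (w$i) (T$i$i * w$i) = Re (T$i$i) * (a i)^2"
      unfolding inner_complex_def cmod_power2 a_def by (simp add: algebra_simps power2_eq_square)
    hence diag_term: "inner (w$i) (T$i$i * w$i) \<le> - \<mu> * (a i)^2"
      using mult_right_mono[OF diag[of i], of "(a i)^2"] by simp
    have off_terms: "(\<Sum>j\<in>UNIV-{i}. inner (w$i) (T$i$j * w$j)) \<le> (\<Sum>j\<in>UNIV-{i}. c * (a i * a j))"
    proof (rule sum_mono)
      fix j assume j: "j \<in> UNIV - {i}"
      have "inner (w$i) (T$i$j * w$j) \<le> norm (T$i$j) * (a i * a j)"
        using norm_cauchy_schwarz[of "w$i" "T$i$j * w$j"] by (simp add: a_def norm_mult mult_ac)
      also have "\<dots> \<le> c * (a i * a j)"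
        using off[of i j] j by (intro mult_right_mono) (auto simp: a_def)
      finally show "inner (w$i) (T$i$j * w$j) \<le> c * (a i * a j)" .
    qed
    have "(\<Sum>j\<in>UNIV-{i}. c * (a i * a j)) \<le> (\<Sum>j\<in>UNIV. c * (a i * a j))"
      using c by (intro sum_mono2) (auto simp: a_def)
    moreover have "(\<Sum>j\<in>UNIV. inner (w$i) (T$i$j * w$j))
        = inner (w$i) (T$i$i * w$i) + (\<Sum>j\<in>UNIV-{i}. inner (w$i) (T$i$j * w$j))"
      by (simp add: sum.remove)
    ultimately show ?thesis using diag_term off_terms by linarith
  qed
  have "inner w (T *v w) = (\<Sum>i\<in>UNIV. \<Sum>j\<in>UNIV. inner (w$i) (T$i$j * w$j))"
    by (simp add: inner_vec_def matrix_vector_mult_def inner_sum_right)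
  also have "\<dots> \<le> (\<Sum>i\<in>UNIV. - \<mu> * (a i)^2 + (\<Sum>j\<in>UNIV. c * (a i * a j)))"
    by (intro sum_mono row)
  also have "\<dots> = - \<mu> * (\<Sum>i\<in>UNIV. (a i)^2) + c * (\<Sum>i\<in>UNIV. \<Sum>j\<in>UNIV. a i * a j)"
    by (simp add: sum.distrib sum_distrib_left sum_subtractf sum_negf)
  also have "\<dots> \<le> - \<mu> * (\<Sum>i\<in>UNIV. (a i)^2) + c * (real CARD('n) * (\<Sum>i\<in>UNIV. (a i)^2))"
    using pairs c by (intro add_left_mono mult_left_mono)
  also have "\<dots> \<le> - (\<mu>/2) * (\<Sum>i\<in>UNIV. (a i)^2)"
    using small mult_right_mono[OF small, of "\<Sum>i\<in>UNIV. (a i)^2"]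
    by (simp add: algebra_simps sum_nonneg)
  finally show ?thesis by (simp add: a_sq)
qed

text \<open>An upper triangular matrix (with respect to some ordering ix of the indices) with
  diagonal entries in the open left half plane becomes diagonally dominant, hence coercive,
  after conjugation by diag(delta^ix(i)) for small delta > 0.\<close>

lemma triangular_scaling_coercive:
  fixes B :: "complex^'n^'n" and ix :: "'n \<Rightarrow> nat"
  assumes inj: "inj ix" and tri: "\<And>i j. ix j < ix i \<Longrightarrow> B$i$j = 0"
    and diag: "\<And>i. Re (B$i$i) < 0"
  obtains f \<alpha> where "\<alpha> > 0" "\<And>i. f i \<noteq> 0"
    "\<And>w. inner w ((diag_cmat (\<lambda>i. inverse (f i)) ** B ** diag_cmat f) *v w) \<le> - \<alpha> * (norm w)^2"
proof -
  define \<mu> where "\<mu> = Min ((\<lambda>i. - Re (B$i$i)) ` UNIV)"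
  have \<mu>: "\<mu> > 0" unfolding \<mu>_def using diag by simp
  have B_diag: "Re (B$i$i) \<le> - \<mu>" for i
  proof -
    have "\<mu> \<le> - Re (B$i$i)" unfolding \<mu>_def by (rule Min_le) auto
    thus ?thesis by simp
  qed
  define L where "L = l1n B"
  have L: "L \<ge> 0" by (simp add: L_def l1n_nonneg)
  have B_entry: "norm (B$i$j) \<le> L" for i j
    unfolding L_def l1n_def
    by (rule order_trans[OF member_le_sum[of j UNIV "\<lambda>j. norm (B$i$j)"]
          member_le_sum[of i UNIV "\<lambda>i. \<Sum>j\<in>UNIV. norm (B$i$j)"]]) (auto intro: sum_nonneg)
  define n where "n = real CARD('n)"
  define \<delta> where "\<delta> = min 1 (\<mu> / (2 * (L * n + 1)))"
  have Ln: "0 < 2 * (L * n + 1)" using L by (simp add: n_def add_nonneg_pos)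
  have \<delta>: "\<delta> > 0" "\<delta> \<le> 1" using \<mu> Ln unfolding \<delta>_def by (simp_all del: distrib_left_numeral)
  have \<delta>_small: "\<delta> * L * n \<le> \<mu> / 2"
  proof -
    have "\<delta> \<le> \<mu> / (2 * (L * n + 1))" by (simp add: \<delta>_def)
    hence "\<delta> * (2 * (L * n + 1)) \<le> \<mu>" using pos_le_divide_eq[OF Ln] by blast
    thus ?thesis using \<delta> by (simp add: algebra_simps)
  qed
  define f where "f = (\<lambda>i. complex_of_real (\<delta> ^ ix i))"
  define T where "T = diag_cmat (\<lambda>i. inverse (f i)) ** B ** diag_cmat f"
  have f: "f i \<noteq> 0" for i using \<delta> by (simp add: f_def)
  have T_entry: "T$i$j = inverse (f i) * B$i$j * f j" for i j
    by (simp add: T_def diag_cmat_mult_left diag_cmat_mult_right)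
  have "T$i$i = B$i$i" for i using f[of i] by (simp add: T_entry)
  hence T_diag: "Re (T$i$i) \<le> - \<mu>" for i using B_diag[of i] by simp
  have T_off: "norm (T$i$j) \<le> \<delta> * L" if "i \<noteq> j" for i j
  proof (cases "ix j < ix i")
    case True thus ?thesis using tri[OF True] \<delta> L by (simp add: T_entry)
  next
    case False
    with inj that have lt: "ix i < ix j" by (metis injD nat_neq_iff)
    have "norm (T$i$j) = \<delta> ^ ix j / \<delta> ^ ix i * norm (B$i$j)"
      using \<delta> by (simp add: T_entry f_def norm_mult norm_inverse norm_divide norm_power field_simps)
    also have "\<delta> ^ ix j / \<delta> ^ ix i = \<delta> ^ (ix j - ix i)"
      using \<delta> lt by (simp add: power_diff)
    also have "\<delta> ^ (ix j - ix i) * norm (B$i$j) \<le> \<delta> * L"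
      using \<delta> lt B_entry[of i j] power_decreasing[of 1 "ix j - ix i" \<delta>]
      by (intro mult_mono) auto
    finally show ?thesis .
  qed
  have "inner w (T *v w) \<le> - (\<mu>/2) * (norm w)^2" for w
    using \<delta> L \<delta>_small by (intro diag_dominant_coercive[OF T_diag T_off]) (auto simp: n_def)
  with that[of "\<mu>/2" f] \<mu> f show ?thesis by (simp add: T_def)
qed

text \<open>The Schur decomposition is available for the list-based matrices of the
  Jordan_Normal_Form library.  An enumeration g of the finite index type identifies
  complex^'n^'n with square matrices of dimension CARD('n), compatibly with products,
  identity and eigenvalues.\<close>

definition to_jnf :: "(nat \<Rightarrow> 'n::finite) \<Rightarrow> complex^'n^'n \<Rightarrow> complex Matrix.mat" where
  "to_jnf g M = Matrix.mat CARD('n) CARD('n) (\<lambda>(a,b). M $ g a $ g b)"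

definition from_jnf :: "('n::finite \<Rightarrow> nat) \<Rightarrow> complex Matrix.mat \<Rightarrow> complex^'n^'n" where
  "from_jnf ix X = (\<chi> i j. X $$ (ix i, ix j))"

locale index_enumeration =
  fixes g :: "nat \<Rightarrow> 'n::finite"
  assumes bij: "bij_betw g {0..<CARD('n)} UNIV"
begin

definition ix :: "'n \<Rightarrow> nat" where "ix = inv_into {0..<CARD('n)} g"

lemma ix_lt: "ix i < CARD('n)"
proof -
  have "i \<in> g ` {0..<CARD('n)}" using bij by (simp add: bij_betw_def)
  hence "ix i \<in> {0..<CARD('n)}" unfolding ix_def by (rule inv_into_into)
  thus ?thesis by simp
qed

lemma g_ix: "g (ix i) = i"
proof -
  have "i \<in> g ` {0..<CARD('n)}" using bij by (simp add: bij_betw_def)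
  thus ?thesis unfolding ix_def by (rule f_inv_into_f)
qed

lemma ix_g: "k < CARD('n) \<Longrightarrow> ix (g k) = k"
  unfolding ix_def using bij by (intro inv_into_f_f) (auto simp: bij_betw_def)

lemma inj_ix: "inj ix"
  by (metis g_ix injI)

lemma sum_reindex: "(\<Sum>k\<in>{0..<CARD('n)}. h (g k)) = (\<Sum>l\<in>UNIV. (h l :: complex))"
  using sum.reindex_bij_betw[OF bij] .

lemma from_to_jnf: "from_jnf ix (to_jnf g M) = M"
  by (simp add: from_jnf_def to_jnf_def ix_lt g_ix Finite_Cartesian_Product.vec_eq_iff)

lemma to_jnf_carrier: "to_jnf g M \<in> carrier_mat CARD('n) CARD('n)"
  by (simp add: to_jnf_def)

lemma from_jnf_mult:
  assumes X: "X \<in> carrier_mat CARD('n) CARD('n)" and Y: "Y \<in> carrier_mat CARD('n) CARD('n)"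
  shows "from_jnf ix (X * Y) = from_jnf ix X ** from_jnf ix Y"
proof -
  have "(X * Y) $$ (ix i, ix j) = (\<Sum>l\<in>UNIV. X $$ (ix i, ix l) * Y $$ (ix l, ix j))" for i j
  proof -
    have "(X * Y) $$ (ix i, ix j) = (\<Sum>k\<in>{0..<CARD('n)}. X $$ (ix i, k) * Y $$ (k, ix j))"
      using X Y ix_lt[of i] ix_lt[of j] by (simp add: scalar_prod_def)
    also have "\<dots> = (\<Sum>k\<in>{0..<CARD('n)}. X $$ (ix i, ix (g k)) * Y $$ (ix (g k), ix j))"
      by (intro sum.cong refl) (simp add: ix_g)
    also have "\<dots> = (\<Sum>l\<in>UNIV. X $$ (ix i, ix l) * Y $$ (ix l, ix j))"
      by (rule sum_reindex)
    finally show ?thesis .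
  qed
  thus ?thesis by (simp add: from_jnf_def matrix_matrix_mult_def Finite_Cartesian_Product.vec_eq_iff)
qed

lemma from_jnf_one: "from_jnf ix (1\<^sub>m CARD('n)) = mat 1"
  using inj_ix by (simp add: from_jnf_def Finite_Cartesian_Product.vec_eq_iff ix_lt Finite_Cartesian_Product.mat_def inj_eq)

lemma eigenvalue_from_jnf:
  assumes "eigenvalue (to_jnf g (cmat A0)) e"
  shows "is_eigenvalue A0 e"
proof -
  let ?A = "to_jnf g (cmat A0)"
  obtain v where v: "v \<in> carrier_vec CARD('n)" "v \<noteq> 0\<^sub>v CARD('n)" "?A *\<^sub>v v = e \<cdot>\<^sub>v v"
    using assms unfolding eigenvalue_def eigenvector_def by (auto simp: to_jnf_def)
  define vv :: "complex^'n" where "vv = (\<chi> i. vec_index v (ix i))"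
  have "\<exists>k<CARD('n). vec_index v k \<noteq> 0"
  proof (rule ccontr)
    assume "\<not> ?thesis"
    hence "v = 0\<^sub>v CARD('n)" using v(1) by (intro eq_vecI) auto
    with v(2) show False by simp
  qed
  then obtain k where k: "k < CARD('n)" "vec_index v k \<noteq> 0" by blast
  have vv0: "vv \<noteq> 0"
  proof
    assume "vv = 0"
    hence "vv $ g k = 0" by simp
    thus False using k by (simp add: vv_def ix_g)
  qed
  have "cmat A0 *v vv = e *s vv"
  proof -
    have "(cmat A0 *v vv) $ i = (e *s vv) $ i" for i
    proof -
      have "vec_index (?A *\<^sub>v v) (ix i) = (\<Sum>k\<in>{0..<CARD('n)}. cmat A0 $ i $ g k * vec_index v k)"
        using v(1) ix_lt[of i] by (simp add: to_jnf_def scalar_prod_def g_ix)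
      also have "\<dots> = (\<Sum>k\<in>{0..<CARD('n)}. cmat A0 $ i $ g k * vec_index v (ix (g k)))"
        by (intro sum.cong refl) (simp add: ix_g)
      also have "\<dots> = (\<Sum>l\<in>UNIV. cmat A0 $ i $ l * vec_index v (ix l))"
        by (rule sum_reindex)
      finally have "(cmat A0 *v vv) $ i = vec_index (?A *\<^sub>v v) (ix i)"
        by (simp add: matrix_vector_mult_def vv_def)
      also have "\<dots> = e * vec_index v (ix i)" using v ix_lt[of i] by simp
      finally show ?thesis by (simp add: vv_def)
    qed
    thus ?thesis by (simp add: Finite_Cartesian_Product.vec_eq_iff)
  qed
  thus ?thesis using vv0 unfolding is_eigenvalue_def by blast
qed

end

lemma schur_triangular_similarity:
  fixes A0 :: "real^'n^'n"
  assumes stable: "asymp_stable A0"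
  obtains ix :: "'n \<Rightarrow> nat" and P B Q :: "complex^'n^'n"
  where "inj ix" "Q ** P = mat 1" "P ** Q = mat 1" "cmat A0 = P ** B ** Q"
    "\<And>i j. ix j < ix i \<Longrightarrow> B$i$j = 0" "\<And>i. Re (B$i$i) < 0"
proof -
  obtain g where bij: "bij_betw g {0..<CARD('n)} (UNIV::'n set)"
    using ex_bij_betw_nat_finite[of "UNIV::'n set"] by auto
  interpret index_enumeration g by (rule index_enumeration.intro[OF bij])
  define A where "A = to_jnf g (cmat A0)"
  have Ac: "A \<in> carrier_mat CARD('n) CARD('n)" by (simp add: A_def to_jnf_carrier)
  obtain es where cp: "char_poly A = (\<Prod>a\<leftarrow>es. [:-a, 1:])"
    using char_poly_factorized[OF Ac] by blast
  obtain B P Q where sd: "schur_decomposition A es = (B,P,Q)"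
    by (cases "schur_decomposition A es") auto
  from schur_decomposition[OF Ac cp sd]
  have sim: "similar_mat_wit A B P Q" and ut: "upper_triangular B" and dB: "Matrix.diag_mat B = es"
    by auto
  have dA: "dim_row A = CARD('n)" using Ac by simp
  have Bc: "B \<in> carrier_mat CARD('n) CARD('n)" and Pc: "P \<in> carrier_mat CARD('n) CARD('n)"
    and Qc: "Q \<in> carrier_mat CARD('n) CARD('n)" and PQ: "P * Q = 1\<^sub>m CARD('n)"
    and QP: "Q * P = 1\<^sub>m CARD('n)" and APBQ: "A = P * B * Q"
    using sim unfolding similar_mat_wit_def Let_def dA by auto
  have eig: "Re (B $$ (k,k)) < 0" if k: "k < CARD('n)" for k
  proof -
    have "B $$ (k,k) \<in> set es" using dB k Bc by (auto simp: Matrix.diag_mat_def)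
    hence "poly (char_poly A) (B $$ (k,k)) = 0" unfolding cp
      by (auto simp: poly_prod_list prod_list_zero_iff)
    hence "eigenvalue A (B $$ (k,k))" using eigenvalue_root_char_poly[OF Ac] by simp
    hence "is_eigenvalue A0 (B $$ (k,k))" using eigenvalue_from_jnf by (simp add: A_def)
    thus ?thesis using stable unfolding asymp_stable_def by blast
  qed
  show ?thesis
  proof
    show "inj ix" by (rule inj_ix)
    show "from_jnf ix Q ** from_jnf ix P = mat 1" "from_jnf ix P ** from_jnf ix Q = mat 1"
      by (simp_all add: from_jnf_mult[OF Qc Pc, symmetric] from_jnf_mult[OF Pc Qc, symmetric]
          QP PQ from_jnf_one)
    have "cmat A0 = from_jnf ix A" by (simp add: A_def from_to_jnf)
    hence "cmat A0 = from_jnf ix (P * B * Q)" by (simp only: APBQ)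
    thus "cmat A0 = from_jnf ix P ** from_jnf ix B ** from_jnf ix Q"
      by (simp add: from_jnf_mult[OF mult_carrier_mat[OF Pc Bc] Qc] from_jnf_mult[OF Pc Bc])
    show "from_jnf ix B $ i $ j = 0" if "ix j < ix i" for i j
      using ut ix_lt[of i] that Bc unfolding upper_triangular_def from_jnf_def by auto
    show "Re (from_jnf ix B $ i $ i) < 0" for i
      using eig[OF ix_lt[of i]] by (simp add: from_jnf_def)
  qed
qed

lemma stable_similar_coercive:
  fixes A0 :: "real^'n^'n"
  assumes "asymp_stable A0"
  obtains S Si :: "complex^'n^'n" and \<alpha> :: real
  where "\<alpha> > 0" "Si ** S = mat 1" "\<And>w. inner w ((S ** cmat A0 ** Si) *v w) \<le> - \<alpha> * (norm w)^2"
proof -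
  obtain ix :: "'n \<Rightarrow> nat" and P B Q :: "complex^'n^'n" where ix: "inj ix"
    and QP: "Q ** P = mat 1" and PQ: "P ** Q = mat 1" and A0: "cmat A0 = P ** B ** Q"
    and tri: "\<And>i j. ix j < ix i \<Longrightarrow> B$i$j = 0" and diag: "\<And>i. Re (B$i$i) < 0"
    using schur_triangular_similarity[OF assms] by metis
  obtain f \<alpha> where \<alpha>: "\<alpha> > 0" and f: "\<And>i. f i \<noteq> 0"
    and coer: "\<And>w. inner w ((diag_cmat (\<lambda>i. inverse (f i)) ** B ** diag_cmat f) *v w) \<le> - \<alpha> * (norm w)^2"
    using triangular_scaling_coercive[OF ix tri diag] by metis
  define S where "S = diag_cmat (\<lambda>i. inverse (f i)) ** Q"
  define Si where "Si = P ** diag_cmat f"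
  have "Si ** S = P ** (diag_cmat f ** diag_cmat (\<lambda>i. inverse (f i))) ** Q"
    by (simp add: S_def Si_def matrix_mul_assoc)
  hence "Si ** S = mat 1" by (simp add: diag_cmat_inverse[OF f] PQ)
  moreover have "S ** cmat A0 ** Si = diag_cmat (\<lambda>i. inverse (f i)) ** (Q ** P) ** B ** (Q ** P) ** diag_cmat f"
    by (simp add: S_def Si_def A0 matrix_mul_assoc)
  hence "S ** cmat A0 ** Si = diag_cmat (\<lambda>i. inverse (f i)) ** B ** diag_cmat f"
    by (simp add: QP)
  ultimately show ?thesis using that[of \<alpha> Si S] \<alpha> coer by simp
qed

definition cvec :: "real^'n \<Rightarrow> complex^'n" where
  "cvec x = (\<chi> i. complex_of_real (x$i))"

lemma cmat_mult_cvec: "cmat M *v cvec x = cvec (M *v x)"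
  by (simp add: cmat_def cvec_def matrix_vector_mult_def Finite_Cartesian_Product.vec_eq_iff)

lemma linear_cvec: "linear cvec"
  by (rule linearI) (simp_all add: cvec_def Finite_Cartesian_Product.vec_eq_iff of_real_def scaleR_add_left)

lemma isCont_cmat: "isCont (cmat :: real^'n^'n \<Rightarrow> complex^'n^'n) X"
  unfolding isCont_def cmat_def by (intro tendsto_intros)

text \<open>Vector version of step (3): if x' = M(t) x with M(t) -> A0 stable, then x(t) -> 0.
  Complexify and change coordinates by the similarity S making A0 coercive; then the decay
  theorem applies to z = S x.\<close>

lemma stable_limit_decay_vec:
  fixes x :: "real \<Rightarrow> real^'n" and M :: "real \<Rightarrow> real^'n^'n"
  assumes stable: "asymp_stable A0" and conv: "(M \<longlongrightarrow> A0) at_top"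
    and eq: "\<And>t. t \<ge> a \<Longrightarrow> ((\<lambda>u. M u *v x u) has_integral (x t - x a)) {a..t}"
  shows "(x \<longlongrightarrow> 0) at_top"
proof -
  obtain S Si :: "complex^'n^'n" and \<alpha> :: real where \<alpha>: "\<alpha> > 0" and SS: "Si ** S = mat 1"
    and coer: "\<And>w. inner w ((S ** cmat A0 ** Si) *v w) \<le> - \<alpha> * (norm w)^2"
    using stable_similar_coercive[OF stable] by metis
  define z where "z = (\<lambda>u. S *v cvec (x u))"
  define N where "N = (\<lambda>u. S ** cmat (M u) ** Si)"
  have Nz: "N u *v z u = S *v cvec (M u *v x u)" for u
  proof -
    have "N u *v z u = (S ** cmat (M u) ** Si ** S) *v cvec (x u)"
      by (simp add: N_def z_def matrix_vector_mul_assoc)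
    also have "S ** cmat (M u) ** Si ** S = S ** cmat (M u)"
      by (metis matrix_mul_assoc SS matrix_mul_rid)
    also have "(S ** cmat (M u)) *v cvec (x u) = S *v (cmat (M u) *v cvec (x u))"
      by (simp add: matrix_vector_mul_assoc)
    finally show ?thesis by (simp add: cmat_mult_cvec)
  qed
  have lin: "bounded_linear (\<lambda>y. S *v cvec y)"
    by (rule bounded_linear_compose[OF matrix_vector_mul_bounded_linear linear_cvec[unfolded linear_conv_bounded_linear]])
  have eq_z: "((\<lambda>u. N u *v z u) has_integral (z t - z a)) {a..t}" if "t \<ge> a" for t
  proof -
    have "((\<lambda>u. S *v cvec (M u *v x u)) has_integral (S *v cvec (x t - x a))) {a..t}"
      using has_integral_linear[OF eq[OF that] lin] by (simp add: o_def)
    moreover have "S *v cvec (x t - x a) = z t - z a"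
      by (simp add: z_def linear_diff[OF linear_cvec] matrix_vector_mult_diff_distrib)
    ultimately show ?thesis by (simp add: Nz)
  qed
  have "((\<lambda>u. cmat (M u)) \<longlongrightarrow> cmat A0) at_top"
    using conv isCont_cmat isCont_tendsto_compose by blast
  hence "(N \<longlongrightarrow> S ** cmat A0 ** Si) at_top"
    unfolding N_def matrix_matrix_mult_def by (intro tendsto_intros)
  from coercive_limit_decay[OF \<alpha> coer this eq_z]
  have "((\<lambda>u. Si *v z u) \<longlongrightarrow> Si *v 0) at_top"
    by (rule bounded_linear.tendsto[OF matrix_vector_mul_bounded_linear])
  hence "((\<lambda>u. cvec (x u)) \<longlongrightarrow> 0) at_top"
    by (simp add: z_def matrix_vector_mul_assoc SS)
  hence "((\<lambda>u. Re (cvec (x u) $ i)) \<longlongrightarrow> Re ((0::complex^'n) $ i)) at_top" for i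
    by (intro tendsto_intros)
  thus ?thesis by (intro vec_tendstoI) (simp add: cvec_def)
qed

text \<open>Matrix version: apply the vector version to every column X(t) e_j.\<close>

lemma stable_limit_decay:
  fixes X :: "real \<Rightarrow> real^'n^'n" and M :: "real \<Rightarrow> real^'n^'n"
  assumes stable: "asymp_stable A0" and conv: "(M \<longlongrightarrow> A0) at_top"
    and eq: "\<And>t. t \<ge> a \<Longrightarrow> ((\<lambda>u. M u ** X u) has_integral (X t - X a)) {a..t}"
  shows "(X \<longlongrightarrow> 0) at_top"
proof -
  have column: "bounded_linear (\<lambda>Y::real^'n^'n. Y *v axis j 1)" for j
    unfolding linear_conv_bounded_linear[symmetric]
    by (rule linearI) (simp_all add: Finite_Cartesian_Product.vec_eq_iff matrix_vector_mult_def
        sum_distrib_left algebra_simps sum.distrib)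
  have "((\<lambda>u. X u *v axis j 1) \<longlongrightarrow> 0) at_top" for j
  proof (rule stable_limit_decay_vec[OF stable conv])
    fix t assume "t \<ge> a"
    from has_integral_linear[OF eq[OF this] column[of j]]
    show "((\<lambda>u. M u *v (X u *v axis j 1)) has_integral (X t *v axis j 1 - X a *v axis j 1)) {a..t}"
      by (simp add: o_def matrix_vector_mul_assoc matrix_vector_mult_diff_rdistrib)
  qed
  hence "((\<lambda>u. (X u *v axis j 1) $ i) \<longlongrightarrow> (0::real^'n) $ i) at_top" for i j
    by (intro tendsto_intros)
  hence "((\<lambda>u. X u $ i $ j) \<longlongrightarrow> 0 $ i $ j) at_top" for i j
    by (simp add: matrix_vector_mult_def axis_def if_distrib cong: if_cong)
  thus ?thesis by (intro vec_tendstoI) simp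
qed

section \<open>The time average\<close>

lemma cesaro_mean_tendsto_zero:
  fixes h :: "real \<Rightarrow> real"
  assumes t0: "t0 \<ge> 0" and cont: "\<And>T. continuous_on {t0..T} h" and nonneg: "\<And>t. 0 \<le> h t"
    and lim: "(h \<longlongrightarrow> 0) at_top"
  shows "((\<lambda>T. (1/T) * integral {t0..T} h) \<longlongrightarrow> 0) at_top"
proof (rule tendstoI)
  fix \<epsilon> :: real assume \<epsilon>: "\<epsilon> > 0"
  have "eventually (\<lambda>t. h t < \<epsilon>/2) at_top" using lim \<epsilon> by (intro order_tendstoD(2)) auto
  then obtain T0 where T0: "\<And>t. t \<ge> T0 \<Longrightarrow> h t < \<epsilon>/2" by (auto simp: eventually_at_top_linorder)
  define T1 where "T1 = max T0 t0"
  define C where "C = integral {t0..T1} h"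
  have bound: "(1/T) * integral {t0..T} h < \<epsilon>" if T: "T \<ge> max T1 (max 1 (2*C/\<epsilon> + 1))" for T
  proof -
    have T1: "t0 \<le> T1" "T1 \<le> T" and T_pos: "T > 0" and T_C: "C / T < \<epsilon> / 2"
      using T \<epsilon> by (auto simp: T1_def field_simps)
    have int: "h integrable_on {t0..T}" by (rule integrable_continuous_real[OF cont])
    have "integral {t0..T} h = C + integral {T1..T} h"
      unfolding C_def using Henstock_Kurzweil_Integration.integral_combine[OF T1 int] by simp
    moreover have "integral {T1..T} h \<le> integral {T1..T} (\<lambda>_. \<epsilon>/2)"
      using T0 T1 integrable_subinterval_real[OF int, of T1 T]
      by (intro integral_le) (auto simp: T1_def less_imp_le)
    moreover have "integral {T1..T} (\<lambda>_. \<epsilon>/2) \<le> \<epsilon>/2 * T" using T1 t0 \<epsilon> by simp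
    ultimately have "integral {t0..T} h \<le> C + \<epsilon>/2 * T" by linarith
    hence "(1/T) * integral {t0..T} h \<le> C / T + \<epsilon>/2"
      using T_pos by (simp add: field_simps)
    thus ?thesis using T_C by linarith
  qed
  have "0 \<le> integral {t0..T} h" for T
    by (rule integral_nonneg[OF integrable_continuous_real[OF cont]]) (simp add: nonneg)
  with bound show "eventually (\<lambda>T. dist ((1/T) * integral {t0..T} h) 0 < \<epsilon>) at_top"
    unfolding eventually_at_top_linorder by (intro exI[of _ "max T1 (max 1 (2*C/\<epsilon> + 1))"]) auto
qed

theorem mean_square_deviation_tendsto_zero:
  fixes A :: "real \<Rightarrow> real^'n^'n" and A0 :: "real^'n^'n" and \<Phi> :: "real \<Rightarrow> real^'n^'n"
  assumes conv: "(A \<longlongrightarrow> A0) at_top" and stable: "asymp_stable A0" and t0: "t0 \<ge> 0"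
    and Phi: "\<And>t. t \<ge> t0 \<Longrightarrow> ((\<lambda>s. A s ** \<Phi> s) has_integral (\<Phi> t - mat 1)) {t0..t}"
  shows "((\<lambda>T. (1 / T) * integral {t0..T}
            (\<lambda>t. (mat_norm2 (\<Phi> t - mat_exp ((t - t0) *\<^sub>R A0)))\<^sup>2)) \<longlongrightarrow> 0) at_top"
proof -
  define \<Psi> where "\<Psi> = (\<lambda>t. mat_exp ((t - t0) *\<^sub>R A0))"
  have "((\<lambda>s. A s ** \<Phi> s) has_integral 0) {t0..t0}"
    using has_integral_refl(1)[of "\<lambda>s. A s ** \<Phi> s" t0] by (simp add: cbox_interval)
  from has_integral_unique[OF Phi[OF order_refl] this] have "\<Phi> t0 = mat 1" by simp
  hence Phi_eq: "\<And>t. t \<ge> t0 \<Longrightarrow> ((\<lambda>s. A s ** \<Phi> s) has_integral (\<Phi> t - \<Phi> t0)) {t0..t}"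
    using Phi by simp
  have "(\<Phi> \<longlongrightarrow> 0) at_top" by (rule stable_limit_decay[OF stable conv Phi_eq])
  moreover have "(\<Psi> \<longlongrightarrow> 0) at_top"
    unfolding \<Psi>_def by (rule stable_limit_decay[OF stable tendsto_const mat_exp_shift_integral])
  ultimately have "((\<lambda>t. l1n (\<Phi> t - \<Psi> t)) \<longlongrightarrow> 0) at_top"
    using tendsto_diff by (intro tendsto_l1n_zero) fastforce
  hence "((\<lambda>t. mat_norm2 (\<Phi> t - \<Psi> t)) \<longlongrightarrow> 0) at_top"
    by (rule Lim_null_comparison[rotated]) (simp add: mat_norm2_nonneg mat_norm2_le_l1n)
  hence lim: "((\<lambda>t. (mat_norm2 (\<Phi> t - \<Psi> t))\<^sup>2) \<longlongrightarrow> 0) at_top"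
    using tendsto_power[of _ 0 _ 2] by fastforce
  have "continuous_on {t0..T} (\<lambda>t. \<Phi> t - \<Psi> t)" for T
    unfolding \<Psi>_def
    by (intro continuous_intros continuous_on_mat_exp_shift integral_equation_continuous[OF Phi_eq])
  hence cont: "continuous_on {t0..T} (\<lambda>t. (mat_norm2 (\<Phi> t - \<Psi> t))\<^sup>2)" for T
    using continuous_on_compose2[OF continuous_at_imp_continuous_on[OF ballI[OF isCont_mat_norm2]]]
    by (intro continuous_intros) blast
  from cesaro_mean_tendsto_zero[OF t0 cont _ lim] show ?thesis by (simp add: \<Psi>_def)
qed

theorem lemma3:
  fixes M :: "'a measure"
    and A :: "'a \<Rightarrow> real \<Rightarrow> real^'n^'n"
    and A0 :: "'a \<Rightarrow> real^'n^'n"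
    and \<Phi> :: "'a \<Rightarrow> real \<Rightarrow> real^'n^'n"
    and t0 :: real
  assumes "prob_space M"
    and A_rand: "\<And>t. t \<ge> 0 \<Longrightarrow> (\<lambda>\<omega>. A \<omega> t) \<in> borel_measurable M"
    and A_meas: "\<And>\<omega>. \<omega> \<in> space M \<Longrightarrow> A \<omega> \<in> borel_measurable (restrict_space lborel {0..})"
    and A_bdd: "\<And>\<omega>. \<omega> \<in> space M \<Longrightarrow> \<exists>B. \<forall>t\<ge>0. mat_norm2 (A \<omega> t) \<le> B"
    and A0_rand: "A0 \<in> borel_measurable M"
    and A_conv: "AE \<omega> in M. (A \<omega> \<longlongrightarrow> A0 \<omega>) at_top"
    and A0_stable: "AE \<omega> in M. asymp_stable (A0 \<omega>)"
    and t0: "t0 \<ge> 0"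
    and Phi: "\<And>\<omega> t. \<omega> \<in> space M \<Longrightarrow> t \<ge> t0 \<Longrightarrow>
              ((\<lambda>s. A \<omega> s ** \<Phi> \<omega> s) has_integral (\<Phi> \<omega> t - mat 1)) {t0..t}"
  shows "AE \<omega> in M. ((\<lambda>T. (1 / T) * integral {t0..T}
            (\<lambda>t. (mat_norm2 (\<Phi> \<omega> t - mat_exp ((t - t0) *\<^sub>R A0 \<omega>)))\<^sup>2)) \<longlongrightarrow> 0) at_top"
  using A_conv A0_stable AE_space
proof eventually_elim
  case (elim \<omega>)
  show ?case by (rule mean_square_deviation_tendsto_zero[OF elim(1) elim(2) t0 Phi[OF elim(3)]])
qed

end
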